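(* Let $G=\langle a\rangle\times\langle b\rangle\cong\mathbb{Z}\times\mathbb{Z}$ and let $\mathcal{A}$ be a Schur ring over $G$ such that $\langle a^k\rangle$ is an $\mathcal{A}$-subgroup for some nonzero integer $k$. Let $D$ be the basic set of $\mathcal{A}$ containing $b$. Then one of the following holds: (i) $D=\{b\}$; (ii) $D=\{b,b^{-1}\}$; (iii) $D=\{ba^{i_0},b\}$ for some nonzero integer $i_0$; (iv) $D=\{b^{-1}a^{i_1},b\}$ for some nonzero integer $i_1$; (v) $D=\{b,\,ba^{i_2},\,b^{-1},\,b^{-1}a^{-i_2}\}$ for some nonzero integer $i_2$.
   Context: $\mathbb{F}$ is a field of characteristic $0$. A Schur ring over a group $G$ is a subspace $\mathcal{A}\subseteq\mathbb{F}[G]$ spanned by the elements $\underline{D}=\sum_{g\in D}g$, $D\in\mathcal{D}$, where $\mathcal{D}$ is a partition of $G$ into finite subsets such that $\{1\}\in\mathcal{D}$, $D\in\mathcal{D}\Rightarrow D^{-1}\in\mathcal{D}$, and each product $\underline{D_1}\,\underline{D_2}$ is a finite $\mathbb{F}$-linear combination of the $\underline{D}$, $D\in\mathcal{D}$. The elements of $\mathcal{D}$ are basic sets; an $\mathcal{A}$-subgroup is a subgroup which is a union of basic sets. *)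

theory Defs
  imports Main "HOL-Library.Product_Plus"
begin

text \<open>The group G = <a> x <b> = Z x Z is modelled as int \<times> int written additively,
  with a = (1,0) and b = (0,1); so b a^i = (i,1), b^-1 a^i = (i,-1).
  Elements of the group algebra F[G] are finitely supported functions G \<Rightarrow> F.\<close>

type_synonym grp = "int \<times> int"

definition ga_ind :: "grp set \<Rightarrow> grp \<Rightarrow> 'f::field_char_0" where
  "ga_ind D = (\<lambda>g. if g \<in> D then 1 else 0)"

definition ga_mult :: "(grp \<Rightarrow> 'f::field_char_0) \<Rightarrow> (grp \<Rightarrow> 'f) \<Rightarrow> grp \<Rightarrow> 'f" where
  "ga_mult x y = (\<lambda>g. \<Sum>h\<in>{h. x h \<noteq> 0}. x h * y (g - h))"

definition schur_partition :: "'f::field_char_0 itself \<Rightarrow> grp set set \<Rightarrow> bool" where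
  "schur_partition _ \<D> \<longleftrightarrow>
     (\<forall>D\<in>\<D>. D \<noteq> {} \<and> finite D) \<and>
     (\<forall>D1\<in>\<D>. \<forall>D2\<in>\<D>. D1 \<noteq> D2 \<longrightarrow> D1 \<inter> D2 = {}) \<and>
     \<Union>\<D> = UNIV \<and>
     {0} \<in> \<D> \<and>
     (\<forall>D\<in>\<D>. uminus ` D \<in> \<D>) \<and>
     (\<forall>D1\<in>\<D>. \<forall>D2\<in>\<D>. \<exists>S c. finite S \<and> S \<subseteq> \<D> \<and>
        ga_mult (ga_ind D1 :: grp \<Rightarrow> 'f) (ga_ind D2) = (\<lambda>g. \<Sum>E\<in>S. c E * ga_ind E g))"

definition A_subgroup :: "grp set set \<Rightarrow> grp set \<Rightarrow> bool" where
  "A_subgroup \<D> H \<longleftrightarrow> 0 \<in> H \<and> (\<forall>x\<in>H. \<forall>y\<in>H. x - y \<in> H) \<and>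
     H = \<Union>{E\<in>\<D>. E \<subseteq> H}"

end

theory Submission
  imports Defs "HOL-Number_Theory.Cong"
begin

text \<open>Write \<open>L = \<langle>a\<rangle>\<close>. Schur's multiplier theorem, proved by counting the \<open>p\<close>-tuples of a basic
  set \<open>E\<close> with prescribed sum modulo \<open>p\<close> through their cyclic rotations, shows that \<open>p\<cdot>E\<close> is a union
  of basic sets for every prime \<open>p\<close>; hence every subgroup \<open>nG\<close> is an \<open>\<A>\<close>-subgroup. Together with
  \<open>\<langle>a\<^sup>k\<rangle>\<close> this makes \<open>L\<close> an \<open>\<A>\<close>-subgroup whose basic sets lie in \<open>{a\<^sup>t, a\<^sup>-\<^sup>t}\<close>, and it confines
  \<open>D\<close> to the cosets \<open>bL\<close> and \<open>b\<^sup>-\<^sup>1L\<close>. Since the structure constants of \<open>D\<cdot>E\<close> for a basic set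
  \<open>E \<subseteq> L\<close> are constant on \<open>D\<close>, a difference \<open>a\<^sup>t\<close> of two points of \<open>D\<close> in one coset reappears as
  \<open>a\<^sup>\<plusminus>\<^sup>t\<close> in the other coset; so each coset contains at most two points of \<open>D\<close>. In the remaining
  case \<open>D = {b, ba\<^sup>i, b\<^sup>-\<^sup>1a\<^sup>u, b\<^sup>-\<^sup>1a\<^sup>u\<^sup>+\<^sup>i}\<close>, the set \<open>D\<close> is symmetric about \<open>a\<^sup>m\<close>, \<open>m = u + i\<close>; if
  \<open>m \<noteq> 0\<close> this makes \<open>{a\<^sup>m}\<close> basic, and translating the relation \<open>a\<^sup>i \<sim> a\<^sup>-\<^sup>i\<close> by \<open>a\<^sup>m\<close> is absurd.\<close>

section \<open>Schur rings by structure constants\<close>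

definition conv_count :: "grp set \<Rightarrow> grp set \<Rightarrow> grp \<Rightarrow> nat" where
  "conv_count E F g = card {h \<in> E. g - h \<in> F}"

locale schur_ring =
  fixes \<D> :: "grp set set"
  assumes basic_finite: "\<And>D. D \<in> \<D> \<Longrightarrow> finite D"
    and basic_disjoint: "\<And>D1 D2. D1 \<in> \<D> \<Longrightarrow> D2 \<in> \<D> \<Longrightarrow> D1 \<noteq> D2 \<Longrightarrow> D1 \<inter> D2 = {}"
    and basic_cover: "\<Union>\<D> = UNIV"
    and zero_basic: "{0} \<in> \<D>"
    and uminus_basic: "\<And>D. D \<in> \<D> \<Longrightarrow> uminus ` D \<in> \<D>"
    and conv_count_basic_const: "\<And>D1 D2 E g g'. D1 \<in> \<D> \<Longrightarrow> D2 \<in> \<D> \<Longrightarrow> E \<in> \<D> \<Longrightarrow>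
      g \<in> E \<Longrightarrow> g' \<in> E \<Longrightarrow> conv_count D1 D2 g = conv_count D1 D2 g'"

lemma ga_mult_ga_ind:
  assumes "finite E"
  shows "ga_mult (ga_ind E :: grp \<Rightarrow> 'f::field_char_0) (ga_ind F) g = of_nat (conv_count E F g)"
proof -
  have "{h. (ga_ind E h :: 'f) \<noteq> 0} = E" by (auto simp: ga_ind_def)
  then have "ga_mult (ga_ind E :: grp \<Rightarrow> 'f) (ga_ind F) g = (\<Sum>h\<in>E. if g - h \<in> F then 1 else 0)"
    by (simp add: ga_mult_def ga_ind_def)
  also have "\<dots> = of_nat (conv_count E F g)"
    using sum.inter_filter[OF assms, of "\<lambda>_. 1::'f" "\<lambda>h. g - h \<in> F"] by (simp add: conv_count_def)
  finally show ?thesis .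
qed

lemma schur_partition_imp_schur_ring:
  assumes "schur_partition TYPE('f::field_char_0) \<D>"
  shows "schur_ring \<D>"
proof -
  note s = assms[unfolded schur_partition_def]
  show ?thesis
  proof
    fix D1 D2 E g g'
    assume D1: "D1 \<in> \<D>" and D2: "D2 \<in> \<D>" and E: "E \<in> \<D>" and g: "g \<in> E" and g': "g' \<in> E"
    obtain S c where S: "finite S" "S \<subseteq> \<D>"
      and eq: "ga_mult (ga_ind D1 :: grp \<Rightarrow> 'f) (ga_ind D2) = (\<lambda>g. \<Sum>E\<in>S. c E * ga_ind E g)"
      using s D1 D2 by blast
    have coeff: "(\<Sum>E'\<in>S. c E' * (ga_ind E' x :: 'f)) = (if E \<in> S then c E else 0)" if "x \<in> E" for x
    proof -
      have "(\<Sum>E'\<in>S. c E' * (ga_ind E' x :: 'f)) = (\<Sum>E'\<in>S. if E' = E then c E' else 0)"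
      proof (rule sum.cong)
        fix E' assume "E' \<in> S"
        then have "x \<in> E' \<longleftrightarrow> E' = E" using s S E \<open>x \<in> E\<close> by blast
        then show "c E' * ga_ind E' x = (if E' = E then c E' else 0)" by (auto simp: ga_ind_def)
      qed simp
      then show ?thesis using S(1) by (simp add: sum.delta')
    qed
    have "(of_nat (conv_count D1 D2 g) :: 'f) = of_nat (conv_count D1 D2 g')"
      using ga_mult_ga_ind[of D1 D2] s D1 eq coeff[OF g] coeff[OF g'] by (metis (no_types, lifting))
    then show "conv_count D1 D2 g = conv_count D1 D2 g'" by simp
  qed (use s in auto)
qed

section \<open>Rotations of lists of prime length\<close>

lemma sum_list_rotate1: "sum_list (rotate1 xs) = (sum_list xs :: 'a::comm_monoid_add)"
  by (cases xs) (simp_all add: add.commute)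

lemma rotate_mult_fixed: "rotate d xs = xs \<Longrightarrow> rotate (d * c) xs = xs"
proof (induct c)
  case (Suc c)
  have "rotate (d * Suc c) xs = rotate d (rotate (d * c) xs)" by (simp add: rotate_rotate)
  then show ?case using Suc by simp
qed simp

lemma rotate_fixed_imp_rotate1_fixed:
  assumes p: "prime (length xs)" and fixed: "rotate d xs = xs" and d: "0 < d" "d < length xs"
  shows "rotate1 xs = xs"
proof -
  have "coprime d (length xs)"
    using d p nat_dvd_not_less prime_imp_coprime coprime_commute by blast
  then obtain c where c: "[d * c = Suc 0] (mod length xs)" using cong_solve_coprime_nat by blast
  have "rotate (d * c) xs = xs" using rotate_mult_fixed[OF fixed] .
  moreover have "rotate (d * c) xs = rotate ((d * c) mod length xs) xs" by (rule rotate_conv_mod)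
  moreover have "(d * c) mod length xs = 1" using c prime_ge_2_nat[OF p] unfolding cong_def by simp
  ultimately show ?thesis by simp
qed

lemma rotate1_fixed_rotate: "rotate1 xs = xs \<Longrightarrow> rotate1 (rotate n xs) = rotate n xs"
  by (simp add: rotate1_rotate_swap)

definition rotations :: "'a list \<Rightarrow> 'a list set" where
  "rotations xs = range (\<lambda>n. rotate n xs)"

lemma rotations_eq_image:
  assumes "xs \<noteq> []"
  shows "rotations xs = (\<lambda>i. rotate i xs) ` {..<length xs}"
proof -
  have "rotate n xs \<in> (\<lambda>i. rotate i xs) ` {..<length xs}" for n
    using rotate_conv_mod[of n xs] assms by fastforce
  then show ?thesis by (auto simp: rotations_def)
qed

lemma mem_rotations_sym:
  assumes "ys \<in> rotations xs"
  shows "xs \<in> rotations ys"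
proof -
  obtain n where ys: "ys = rotate n xs" using assms by (auto simp: rotations_def)
  let ?m = "length xs - n mod length xs"
  have "rotate ?m ys = xs"
  proof (cases "xs = []")
    case False
    have "(?m + n) mod length xs = (?m + n mod length xs) mod length xs"
      by (simp add: mod_add_right_eq)
    also have "\<dots> = 0" using False by simp
    finally show ?thesis unfolding ys rotate_rotate by (rule rotate_id)
  qed (simp add: ys)
  then show ?thesis unfolding rotations_def by (metis rangeI)
qed

lemma rotate1_mem_rotations_iff: "rotate1 ys \<in> rotations xs \<longleftrightarrow> ys \<in> rotations xs"
proof
  assume "ys \<in> rotations xs"
  then obtain n where "rotate1 ys = rotate (Suc n) xs" by (auto simp: rotations_def)
  then show "rotate1 ys \<in> rotations xs" unfolding rotations_def by (metis rangeI)
next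
  assume "rotate1 ys \<in> rotations xs"
  then obtain n where n: "rotate1 ys = rotate n xs" by (auto simp: rotations_def)
  have "rotate1 ys = rotate (Suc 0) ys" by simp
  then have "rotate1 ys \<in> rotations ys" unfolding rotations_def by (metis rangeI)
  then obtain m where "ys = rotate m (rotate1 ys)"
    using mem_rotations_sym by (auto simp: rotations_def)
  then have "ys = rotate (m + n) xs" using n by (simp add: rotate_rotate)
  then show "ys \<in> rotations xs" unfolding rotations_def by (metis rangeI)
qed

lemma rotate1_fixed_if_mem_rotations:
  assumes "ys \<in> rotations xs" and "rotate1 ys = ys"
  shows "rotate1 xs = xs"
proof -
  obtain m where "xs = rotate m ys" using mem_rotations_sym[OF assms(1)] by (auto simp: rotations_def)
  then show ?thesis using rotate1_fixed_rotate[OF assms(2)] by simp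
qed

lemma card_rotations_prime:
  assumes p: "prime (length xs)" and not_fixed: "rotate1 xs \<noteq> xs"
  shows "card (rotations xs) = length xs"
proof -
  have distinct: False if ij: "i < j" "j < length xs" and eq: "rotate i xs = rotate j xs" for i j
  proof -
    have "rotate (j - i) (rotate i xs) = rotate j xs" using ij by (simp add: rotate_rotate)
    then have "rotate (j - i) (rotate i xs) = rotate i xs" using eq by simp
    then have "rotate1 (rotate i xs) = rotate i xs"
      using rotate_fixed_imp_rotate1_fixed[of "rotate i xs" "j - i"] p ij by simp
    moreover have "rotate i xs \<in> rotations xs" unfolding rotations_def by (rule rangeI)
    ultimately show False using not_fixed rotate1_fixed_if_mem_rotations by blast
  qed
  have "inj_on (\<lambda>i. rotate i xs) {..<length xs}"
  proof (rule inj_onI)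
    fix i j assume "i \<in> {..<length xs}" "j \<in> {..<length xs}" "rotate i xs = rotate j xs"
    then show "i = j" using distinct[of i j] distinct[of j i] by (cases i j rule: linorder_cases) auto
  qed
  moreover have "xs \<noteq> []" using p by auto
  ultimately show ?thesis by (simp add: rotations_eq_image card_image)
qed

text \<open>The rotation orbits of non-constant lists of prime length \<open>p\<close> all have exactly \<open>p\<close> elements.\<close>
lemma card_mod_prime_rotate1_fixed:
  assumes p: "prime p"
  shows "finite S \<Longrightarrow> \<forall>xs\<in>S. length xs = p \<Longrightarrow> \<forall>xs\<in>S. rotate1 xs \<in> S \<Longrightarrow>
    card S mod p = card {xs\<in>S. rotate1 xs = xs} mod p"
proof (induction "card S" arbitrary: S rule: less_induct)
  case less
  show ?case
  proof (cases "\<forall>xs\<in>S. rotate1 xs = xs")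
    case True
    then have "{xs\<in>S. rotate1 xs = xs} = S" by auto
    then show ?thesis by simp
  next
    case False
    then obtain xs where xs: "xs \<in> S" "rotate1 xs \<noteq> xs" by blast
    let ?S' = "S - rotations xs"
    have "rotate n xs \<in> S" for n using xs(1) less(4) by (induct n) auto
    then have sub: "rotations xs \<subseteq> S" by (auto simp: rotations_def)
    have "card (rotations xs) = p" using card_rotations_prime p less(3) xs by metis
    then have card_S: "card S = card ?S' + p"
      using card_Diff_subset[OF finite_subset[OF sub less(2)] sub] card_mono[OF less(2) sub] by simp
    have closed: "\<forall>ys\<in>?S'. rotate1 ys \<in> ?S'" using less(4) rotate1_mem_rotations_iff by blast
    have fixed_eq: "{ys\<in>?S'. rotate1 ys = ys} = {ys\<in>S. rotate1 ys = ys}"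
      using rotate1_fixed_if_mem_rotations xs(2) by blast
    have "finite ?S'" "\<forall>ys\<in>?S'. length ys = p" using less(2,3) by auto
    moreover have "card ?S' < card S" using card_S prime_gt_0_nat[OF p] by simp
    ultimately have "card ?S' mod p = card {ys\<in>?S'. rotate1 ys = ys} mod p"
      using less(1) closed by blast
    then show ?thesis using card_S fixed_eq by simp
  qed
qed

definition smul :: "int \<Rightarrow> grp \<Rightarrow> grp" where
  "smul n g = (n * fst g, n * snd g)"

lemma sum_list_replicate_smul: "sum_list (replicate n g) = smul (int n) g"
  by (induct n) (auto simp: smul_def algebra_simps prod_eq_iff)

lemma smul_inj: "n \<noteq> 0 \<Longrightarrow> smul n g = smul n g' \<Longrightarrow> g = g'"
  by (auto simp: smul_def prod_eq_iff)

lemma smul_mult: "smul (a * b) g = smul a (smul b g)"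
  by (simp add: smul_def)

lemma smul_one [simp]: "smul 1 g = g"
  by (simp add: smul_def)

lemma dvd_components_if_in_range_smul: "g \<in> range (smul n) \<Longrightarrow> n dvd fst g \<and> n dvd snd g"
  by (auto simp: smul_def)

definition tuples :: "grp set \<Rightarrow> nat \<Rightarrow> grp \<Rightarrow> grp list set" where
  "tuples E n x = {xs. length xs = n \<and> set xs \<subseteq> E \<and> sum_list xs = x}"

lemma finite_tuples: "finite E \<Longrightarrow> finite (tuples E n x)"
  by (rule finite_subset[OF _ finite_lists_length_eq[of E n]]) (auto simp: tuples_def)

lemma card_tuples_0: "card (tuples E 0 x) = (if x = 0 then 1 else 0)"
proof -
  have "tuples E 0 x = (if x = 0 then {[]} else {})" by (auto simp: tuples_def)
  then show ?thesis by simp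
qed

lemma tuples_Suc: "tuples E (Suc n) x = (\<Union>e\<in>E. (#) e ` tuples E n (x - e))"
proof (rule set_eqI)
  fix xs
  show "xs \<in> tuples E (Suc n) x \<longleftrightarrow> xs \<in> (\<Union>e\<in>E. (#) e ` tuples E n (x - e))"
    by (cases xs) (auto simp: tuples_def algebra_simps)
qed

lemma card_tuples_Suc:
  assumes "finite E"
  shows "card (tuples E (Suc n) x) = (\<Sum>e\<in>E. card (tuples E n (x - e)))"
proof -
  have "card (tuples E (Suc n) x) = (\<Sum>e\<in>E. card ((#) e ` tuples E n (x - e)))"
    unfolding tuples_Suc
    by (rule card_UN_disjoint) (use assms finite_tuples[OF assms] in auto)
  also have "\<dots> = (\<Sum>e\<in>E. card (tuples E n (x - e)))"
    by (rule sum.cong) (auto intro: card_image simp: inj_on_def)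
  finally show ?thesis .
qed

lemma rotate1_fixed_tuples:
  assumes "p > 0"
  shows "{xs\<in>tuples E p x. rotate1 xs = xs} = (\<lambda>e. replicate p e) ` {e\<in>E. smul (int p) e = x}"
proof (rule set_eqI, rule iffI)
  fix xs assume "xs \<in> {xs\<in>tuples E p x. rotate1 xs = xs}"
  then have xs: "length xs = p" "set xs \<subseteq> E" "sum_list xs = x" "rotate1 xs = xs"
    by (auto simp: tuples_def)
  then have "card (set xs) = 1" using rotate1_fixpoint_card[OF xs(4)] assms by auto
  then obtain e where e: "set xs = {e}" using card_1_singletonE by blast
  then have "xs = replicate p e" using xs(1) by (intro replicate_eqI) auto
  then show "xs \<in> (\<lambda>e. replicate p e) ` {e\<in>E. smul (int p) e = x}"
    using xs e by (auto simp: sum_list_replicate_smul)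
qed (use assms in \<open>auto simp: tuples_def sum_list_replicate_smul\<close>)

lemma card_tuples_prime_mod:
  assumes p: "prime p" and E: "finite E"
  shows "card (tuples E p x) mod p = (if x \<in> smul (int p) ` E then 1 else 0)"
proof -
  have p0: "p > 0" using p prime_gt_0_nat by blast
  have "card (tuples E p x) mod p = card {xs\<in>tuples E p x. rotate1 xs = xs} mod p"
    by (rule card_mod_prime_rotate1_fixed[OF p finite_tuples[OF E]])
      (auto simp: tuples_def sum_list_rotate1)
  also have "card {xs\<in>tuples E p x. rotate1 xs = xs} = card {e\<in>E. smul (int p) e = x}"
    unfolding rotate1_fixed_tuples[OF p0]
    by (rule card_image) (auto simp: inj_on_def replicate_eq_replicate p0)
  also have "card {e\<in>E. smul (int p) e = x} = (if x \<in> smul (int p) ` E then 1 else 0)"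
  proof (cases "x \<in> smul (int p) ` E")
    case True
    then obtain e where "e \<in> E" "x = smul (int p) e" by blast
    moreover have "int p \<noteq> 0" using p0 by simp
    ultimately have "{e\<in>E. smul (int p) e = x} = {e}" using smul_inj by blast
    then show ?thesis using True by simp
  next
    case False
    then have "{e\<in>E. smul (int p) e = x} = {}" by blast
    then show ?thesis using False by (simp only: card.empty if_False)
  qed
  finally show ?thesis using prime_ge_2_nat[OF p] by simp
qed

context schur_ring
begin

lemma ex1_basic_set: "\<exists>!E. E \<in> \<D> \<and> g \<in> E"
proof -
  obtain E where "E \<in> \<D>" "g \<in> E" using basic_cover by blast
  then show ?thesis using basic_disjoint by blast
qed

definition basic_of :: "grp \<Rightarrow> grp set" where
  "basic_of g = (THE E. E \<in> \<D> \<and> g \<in> E)"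

lemma basic_of_in: "basic_of g \<in> \<D>" and mem_basic_of: "g \<in> basic_of g"
  using theI'[OF ex1_basic_set[of g]] unfolding basic_of_def by auto

lemma basic_of_eq: "E \<in> \<D> \<Longrightarrow> g \<in> E \<Longrightarrow> basic_of g = E"
  using ex1_basic_set[of g] basic_of_in mem_basic_of by blast

definition same_basic :: "grp \<Rightarrow> grp \<Rightarrow> bool" where
  "same_basic g g' \<longleftrightarrow> (\<exists>E\<in>\<D>. g \<in> E \<and> g' \<in> E)"

lemma same_basic_iff_mem_basic_of: "same_basic g g' \<longleftrightarrow> g' \<in> basic_of g"
  unfolding same_basic_def using basic_of_in mem_basic_of basic_of_eq by blast

lemma same_basic_sym: "same_basic g g' \<Longrightarrow> same_basic g' g"
  unfolding same_basic_def by blast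

lemma same_basic_0: "same_basic 0 g \<Longrightarrow> g = 0"
  unfolding same_basic_iff_mem_basic_of using basic_of_eq[OF zero_basic] by simp

lemma conv_count_same_basic:
  "D1 \<in> \<D> \<Longrightarrow> D2 \<in> \<D> \<Longrightarrow> same_basic g g' \<Longrightarrow> conv_count D1 D2 g = conv_count D1 D2 g'"
  unfolding same_basic_def using conv_count_basic_const by blast

lemma conv_count_pos_iff: "finite E \<Longrightarrow> 0 < conv_count E F g \<longleftrightarrow> (\<exists>h\<in>E. g - h \<in> F)"
  by (auto simp: conv_count_def card_gt_0_iff)

definition A_set :: "grp set \<Rightarrow> bool" where
  "A_set X \<longleftrightarrow> (\<forall>g g'. same_basic g g' \<longrightarrow> g \<in> X \<longrightarrow> g' \<in> X)"

lemma A_setD: "A_set X \<Longrightarrow> same_basic g g' \<Longrightarrow> g \<in> X \<Longrightarrow> g' \<in> X"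
  unfolding A_set_def by blast

lemma basic_of_subset_A_set: "A_set X \<Longrightarrow> g \<in> X \<Longrightarrow> basic_of g \<subseteq> X"
  unfolding A_set_def same_basic_iff_mem_basic_of by blast

lemma A_set_if_A_subgroup:
  assumes "A_subgroup \<D> H"
  shows "A_set H"
  unfolding A_set_def
proof (intro allI impI)
  fix g g' assume same: "same_basic g g'" and "g \<in> H"
  have "H = \<Union>{E\<in>\<D>. E \<subseteq> H}" using assms by (simp add: A_subgroup_def)
  then obtain E where "E \<in> \<D>" "E \<subseteq> H" "g \<in> E" using \<open>g \<in> H\<close> by blast
  then show "g' \<in> H" using same basic_of_eq unfolding same_basic_iff_mem_basic_of by blast
qed

lemma A_set_sum:
  assumes X: "A_set X" and Y: "A_set Y"
  shows "A_set {x + y | x y. x \<in> X \<and> y \<in> Y}"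
  unfolding A_set_def
proof (intro allI impI)
  fix g g' assume same: "same_basic g g'" and "g \<in> {x + y | x y. x \<in> X \<and> y \<in> Y}"
  then obtain x y where xy: "x \<in> X" "y \<in> Y" "g = x + y" by blast
  have fin: "finite (basic_of x)" using basic_finite basic_of_in by blast
  have "x \<in> basic_of x" "g - x \<in> basic_of y" using xy mem_basic_of by auto
  then have "0 < conv_count (basic_of x) (basic_of y) g" using conv_count_pos_iff[OF fin] by blast
  then have "0 < conv_count (basic_of x) (basic_of y) g'"
    using conv_count_same_basic[OF basic_of_in basic_of_in same] by simp
  then obtain h where "h \<in> basic_of x" "g' - h \<in> basic_of y"
    using conv_count_pos_iff[OF fin] by blast
  then have "h \<in> X" "g' - h \<in> Y"
    using basic_of_subset_A_set[OF X xy(1)] basic_of_subset_A_set[OF Y xy(2)] by blast+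
  moreover have "g' = h + (g' - h)" by simp
  ultimately show "g' \<in> {x + y | x y. x \<in> X \<and> y \<in> Y}" by blast
qed

lemma diff_eq_neg_iff: "a - b = - c \<longleftrightarrow> b = a + (c::'a::ab_group_add)"
  by (metis add_diff_cancel_left' diff_add_cancel diff_minus_eq_add minus_diff_eq)

text \<open>Convolving with the basic set \<open>{-h}\<close> counts membership in \<open>basic_of (e\<^sub>1 + h)\<close>.\<close>
lemma same_basic_translate:
  assumes h: "{h} \<in> \<D>" and same: "same_basic e1 e2"
  shows "same_basic (e1 + h) (e2 + h)"
proof -
  let ?F = "basic_of (e1 + h)"
  have "conv_count ?F {-h} e = card ({e + h} \<inter> ?F)" for e
  proof -
    have "e - f = - h \<longleftrightarrow> f = e + h" for f
      using diff_eq_neg_iff by blast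
    then have "{f \<in> ?F. e - f \<in> {-h}} = {e + h} \<inter> ?F" by auto
    then show ?thesis by (simp add: conv_count_def)
  qed
  moreover have "{-h} \<in> \<D>" using uminus_basic[OF h] by simp
  ultimately have "card ({e1 + h} \<inter> ?F) = card ({e2 + h} \<inter> ?F)"
    using conv_count_same_basic[OF basic_of_in[of "e1 + h"] _ same] by metis
  then have "e2 + h \<in> ?F" using mem_basic_of by (cases "e2 + h \<in> ?F") auto
  then show ?thesis by (simp add: same_basic_iff_mem_basic_of)
qed

section \<open>Schur's multiplier theorem\<close>

definition basic_constant :: "(grp \<Rightarrow> nat) \<Rightarrow> bool" where
  "basic_constant f \<longleftrightarrow> (\<forall>g g'. same_basic g g' \<longrightarrow> f g = f g')"

text \<open>A basic-constant function of finite support is a linear combination of indicators of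
  basic sets, so its convolution with \<open>E\<close> is a combination of structure constants.\<close>
lemma basic_constant_convolution:
  assumes E: "E \<in> \<D>" and f: "basic_constant f" and supp: "finite {y. f y \<noteq> 0}"
  shows "basic_constant (\<lambda>x. \<Sum>e\<in>E. f (x - e))"
proof -
  define S where "S = basic_of ` {y. f y \<noteq> 0}"
  define c where "c F = f (SOME y. y \<in> F)" for F
  have S: "finite S" "S \<subseteq> \<D>" using supp basic_of_in by (auto simp: S_def)
  have f_eq: "f y = (\<Sum>F\<in>S. if y \<in> F then c F else 0)" for y
  proof -
    have c_eq: "c F = f y" if "F \<in> S" "y \<in> F" for F
    proof -
      have "(SOME z. z \<in> F) \<in> F" using that by (meson someI)
      then have "same_basic y (SOME z. z \<in> F)" using that S unfolding same_basic_def by blast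
      then have "f y = f (SOME z. z \<in> F)" using f unfolding basic_constant_def by blast
      then show ?thesis by (simp add: c_def)
    qed
    have "(\<Sum>F\<in>S. if y \<in> F then c F else 0) = (\<Sum>F\<in>S. if F = basic_of y then f y else 0)"
    proof (rule sum.cong)
      fix F assume F: "F \<in> S"
      then have "y \<in> F \<longleftrightarrow> F = basic_of y" using S(2) basic_of_eq mem_basic_of by blast
      then show "(if y \<in> F then c F else 0) = (if F = basic_of y then f y else 0)"
        using c_eq F by auto
    qed simp
    also have "\<dots> = f y"
      unfolding sum.delta[OF S(1)] by (auto simp: S_def)
    finally show ?thesis by simp
  qed
  have expand: "(\<Sum>e\<in>E. f (x - e)) = (\<Sum>F\<in>S. c F * conv_count E F x)" for x
  proof -
    have finE: "finite E" using basic_finite E by blast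
    have "(\<Sum>e\<in>E. f (x - e)) = (\<Sum>F\<in>S. \<Sum>e\<in>E. if x - e \<in> F then c F else 0)"
      unfolding f_eq by (rule sum.swap)
    also have "\<dots> = (\<Sum>F\<in>S. c F * conv_count E F x)"
    proof (rule sum.cong)
      fix F
      show "(\<Sum>e\<in>E. if x - e \<in> F then c F else 0) = c F * conv_count E F x"
        using sum.inter_filter[OF finE, of "\<lambda>_. c F" "\<lambda>e. x - e \<in> F"]
        by (simp add: conv_count_def mult.commute)
    qed simp
    finally show ?thesis .
  qed
  show ?thesis
    unfolding basic_constant_def expand
  proof (intro allI impI)
    fix g g' assume "same_basic g g'"
    then have "conv_count E F g = conv_count E F g'" if "F \<in> S" for F
      using conv_count_same_basic[OF E] S(2) that by blast
    then show "(\<Sum>F\<in>S. c F * conv_count E F g) = (\<Sum>F\<in>S. c F * conv_count E F g')"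
      by simp
  qed
qed

lemma basic_constant_card_tuples:
  assumes E: "E \<in> \<D>"
  shows "basic_constant (\<lambda>x. card (tuples E n x)) \<and> finite {x. card (tuples E n x) \<noteq> 0}"
proof (induct n)
  case 0
  have "basic_constant (\<lambda>x. card (tuples E 0 x))"
    unfolding basic_constant_def card_tuples_0 using same_basic_0 same_basic_sym by metis
  moreover have "{x. card (tuples E 0 x) \<noteq> 0} \<subseteq> {0}" unfolding card_tuples_0 by auto
  ultimately show ?case using finite_subset by blast
next
  case (Suc n)
  have finE: "finite E" using basic_finite E by blast
  have "{x. card (tuples E (Suc n) x) \<noteq> 0} \<subseteq> sum_list ` {xs. set xs \<subseteq> E \<and> length xs = Suc n}"
  proof
    fix x assume "x \<in> {x. card (tuples E (Suc n) x) \<noteq> 0}"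
    then obtain xs where "xs \<in> tuples E (Suc n) x" by fastforce
    then show "x \<in> sum_list ` {xs. set xs \<subseteq> E \<and> length xs = Suc n}" by (auto simp: tuples_def)
  qed
  moreover have "finite (sum_list ` {xs. set xs \<subseteq> E \<and> length xs = Suc n})"
    using finite_lists_length_eq[OF finE] by blast
  moreover have "basic_constant (\<lambda>x. card (tuples E (Suc n) x))"
    unfolding card_tuples_Suc[OF finE] using basic_constant_convolution[OF E] Suc by blast
  ultimately show ?case using finite_subset by blast
qed

text \<open>Modulo \<open>p\<close>, the number of \<open>p\<close>-tuples from \<open>E\<close> summing to \<open>g\<close> is the indicator of \<open>p\<cdot>E\<close>.\<close>
lemma A_set_smul_prime_basic:
  assumes p: "prime p" and E: "E \<in> \<D>"
  shows "A_set (smul (int p) ` E)"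
  unfolding A_set_def
proof (intro allI impI)
  fix g g' assume "same_basic g g'" and g: "g \<in> smul (int p) ` E"
  then have "card (tuples E p g) = card (tuples E p g')"
    using basic_constant_card_tuples[OF E, of p] unfolding basic_constant_def by blast
  then have "card (tuples E p g') mod p = 1"
    using g card_tuples_prime_mod[OF p basic_finite[OF E], of g] by simp
  then show "g' \<in> smul (int p) ` E"
    using card_tuples_prime_mod[OF p basic_finite[OF E], of g'] by (metis zero_neq_one)
qed

lemma A_set_smul_prime:
  assumes X: "A_set X" and p: "prime p"
  shows "A_set (smul (int p) ` X)"
  unfolding A_set_def
proof (intro allI impI)
  fix g g' assume same: "same_basic g g'" and "g \<in> smul (int p) ` X"
  then obtain x where x: "x \<in> X" "g = smul (int p) x" by blast
  then have "g \<in> smul (int p) ` basic_of x" using mem_basic_of by blast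
  then have "g' \<in> smul (int p) ` basic_of x"
    using A_setD[OF A_set_smul_prime_basic[OF p basic_of_in] same] by blast
  then show "g' \<in> smul (int p) ` X" using basic_of_subset_A_set[OF X x(1)] by blast
qed

lemma A_set_range_smul: "n > 0 \<Longrightarrow> A_set (range (smul (int n)))"
proof (induction n rule: less_induct)
  case (less n)
  show ?case
  proof (cases "n = 1")
    case True
    then show ?thesis by (simp add: A_set_def)
  next
    case False
    then obtain p where p: "prime p" "p dvd n" using prime_factor_nat by blast
    then obtain m where m: "n = p * m" by blast
    then have "0 < m" "m < n" using less(2) prime_gt_1_nat[OF p(1)] by auto
    moreover have "range (smul (int n)) = smul (int p) ` range (smul (int m))"
      unfolding m by (auto simp: smul_mult image_image)
    ultimately show ?thesis using A_set_smul_prime[OF less(1) p(1)] by simp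
  qed
qed

lemma dvd_snd_if_same_basic:
  assumes H: "A_set H" "\<And>h. h \<in> H \<Longrightarrow> snd h = 0" and n: "n > 0"
    and same: "same_basic g g'" and g: "g \<in> {a + h | a h. a \<in> range (smul (int n)) \<and> h \<in> H}"
  shows "int n dvd snd g'"
proof -
  have "g' \<in> {a + h | a h. a \<in> range (smul (int n)) \<and> h \<in> H}"
    using A_setD[OF A_set_sum[OF A_set_range_smul[OF n] H(1)] same g] .
  then obtain a h where "g' = a + h" and a: "a \<in> range (smul (int n))" and "h \<in> H" by blast
  then have "snd g' = snd a" using H(2) by simp
  then show ?thesis using dvd_components_if_in_range_smul[OF a] by simp
qed

end

context schur_ring
begin

lemma dvd_if_same_basic_axis:
  assumes same: "same_basic (s, 0) (t, 0)" and s: "s \<noteq> 0"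
  shows "s dvd t"
proof -
  have "(s, 0) = smul (int (nat \<bar>s\<bar>)) (sgn s, 0)" by (simp add: smul_def abs_mult_sgn)
  then have "(s, 0) \<in> range (smul (int (nat \<bar>s\<bar>)))" by (metis rangeI)
  moreover have "0 < nat \<bar>s\<bar>" using s by simp
  ultimately have "(t, 0) \<in> range (smul (int (nat \<bar>s\<bar>)))"
    using A_setD[OF A_set_range_smul same] by blast
  then have "\<bar>s\<bar> dvd t" using dvd_components_if_in_range_smul by force
  then show ?thesis by simp
qed

end

locale schur_ring_axis = schur_ring +
  fixes k :: int
  assumes k_nonzero: "k \<noteq> 0"
    and A_set_multiples: "A_set {(k * n, 0) | n. True}"
begin

text \<open>\<open>N = |k y| + 1\<close> is coprime to \<open>k\<close>, so \<open>\<langle>a\<rangle> \<subseteq> NG + \<langle>a\<^sup>k\<rangle>\<close>, while \<open>N\<close> does not divide \<open>y \<noteq> 0\<close>.\<close>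
lemma A_set_axis: "A_set {g. snd g = 0}"
  unfolding A_set_def
proof (intro allI impI, rule ccontr)
  fix g g' assume same: "same_basic g g'" and "g \<in> {g. snd g = 0}" and "g' \<notin> {g. snd g = 0}"
  then obtain x where g: "g = (x, 0)" and y: "snd g' \<noteq> 0" by (cases g) auto
  define N where "N = nat (\<bar>k * snd g'\<bar> + 1)"
  have N: "int N = \<bar>k * snd g'\<bar> + 1" and N0: "0 < N" by (simp_all add: N_def)
  have "\<bar>k * snd g'\<bar> = k * (sgn k * \<bar>snd g'\<bar>)" by (simp add: abs_mult abs_sgn[of k])
  then have "g = smul (int N) (x, 0) + (k * (- (sgn k * \<bar>snd g'\<bar> * x)), 0)"
    unfolding g N smul_def by (simp add: algebra_simps)
  moreover have "smul (int N) (x, 0) \<in> range (smul (int N))" by (rule rangeI)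
  moreover have "(k * (- (sgn k * \<bar>snd g'\<bar> * x)), 0) \<in> {(k * n, 0) | n. True}" by blast
  ultimately have "g \<in> {a + h | a h. a \<in> range (smul (int N)) \<and> h \<in> {(k * n, 0) | n. True}}"
    by blast
  moreover have "snd h = 0" if "h \<in> {(k * n, 0) | n. True}" for h using that by auto
  ultimately have "int N dvd snd g'"
    using dvd_snd_if_same_basic[OF A_set_multiples _ N0 same] by blast
  then have "int N \<le> \<bar>snd g'\<bar>" using dvd_imp_le_int[OF y, of "int N"] by simp
  moreover have "\<bar>snd g'\<bar> \<le> \<bar>k\<bar> * \<bar>snd g'\<bar>"
    using k_nonzero mult_right_mono[of 1 "\<bar>k\<bar>" "\<bar>snd g'\<bar>"] by simp
  ultimately show False using N by (simp add: abs_mult)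
qed

lemma same_basic_axis:
  assumes same: "same_basic (t, 0) g"
  shows "g = (t, 0) \<or> g = (-t, 0)"
proof -
  obtain u where g: "g = (u, 0)" using A_setD[OF A_set_axis same] by (cases g) auto
  have nonzero: "s \<noteq> 0" if "same_basic (s, 0) (s', 0)" "s' \<noteq> 0" for s s'
  proof
    assume "s = 0"
    then have s0: "same_basic 0 (s', 0)" using that(1) by (simp add: zero_prod_def)
    have "(s', 0) = (0 :: grp)" using same_basic_0[OF s0] .
    then show False using that(2) by (simp add: zero_prod_def)
  qed
  show ?thesis
  proof (cases "t = 0")
    case True
    then have "u = 0" using nonzero[of t u] same g by blast
    then show ?thesis using g True by simp
  next
    case False
    have same': "same_basic (u, 0) (t, 0)" using same g same_basic_sym by simp
    then have "u \<noteq> 0" using nonzero False by blast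
    have "t dvd u" using dvd_if_same_basic_axis[OF _ False] same g by simp
    moreover have "u dvd t" using dvd_if_same_basic_axis[OF same' \<open>u \<noteq> 0\<close>] .
    ultimately have "\<bar>t\<bar> = \<bar>u\<bar>" using zdvd_antisym_abs by blast
    then have "u = t \<or> u = -t" by arith
    then show ?thesis using g by blast
  qed
qed

text \<open>The structure constant of \<open>D \<cdot> basic_of (x - x', 0)\<close> is positive at \<open>(x, \<sigma>)\<close>, hence at \<open>(z, \<tau>)\<close>.\<close>
lemma same_basic_difference_transfer:
  assumes D: "D \<in> \<D>" and x: "(x, \<sigma>) \<in> D" and x': "(x', \<sigma>) \<in> D" and z: "(z, \<tau>) \<in> D"
  obtains z' where "(z', \<tau>) \<in> D" "same_basic (x - x', 0) (z - z', 0)"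
proof -
  let ?B = "basic_of (x - x', 0)"
  have fin: "finite D" using basic_finite D by blast
  have "(x, \<sigma>) - (x', \<sigma>) \<in> ?B" using mem_basic_of by simp
  then have "0 < conv_count D ?B (x, \<sigma>)" using conv_count_pos_iff[OF fin] x' by blast
  moreover have "same_basic (x, \<sigma>) (z, \<tau>)" using D x z unfolding same_basic_def by blast
  ultimately have "0 < conv_count D ?B (z, \<tau>)"
    using conv_count_same_basic[OF D basic_of_in[of "(x - x', 0)"]] by simp
  then obtain e where e: "e \<in> D" "(z, \<tau>) - e \<in> ?B" using conv_count_pos_iff[OF fin] by blast
  then have same: "same_basic (x - x', 0) ((z, \<tau>) - e)" by (simp add: same_basic_iff_mem_basic_of)
  obtain z' w where ew: "e = (z', w)" by (cases e)
  have "w = \<tau>" using A_setD[OF A_set_axis same] ew by simp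
  then show ?thesis using that e(1) same ew by simp
qed

lemma difference_transfer:
  assumes "D \<in> \<D>" "(x, \<sigma>) \<in> D" "(x', \<sigma>) \<in> D" "(z, \<tau>) \<in> D"
  obtains z' where "(z', \<tau>) \<in> D" "z - z' = x - x' \<or> z - z' = x' - x"
proof -
  obtain z' where z': "(z', \<tau>) \<in> D" "same_basic (x - x', 0) (z - z', 0)"
    using same_basic_difference_transfer[OF assms] .
  then have "z - z' = x - x' \<or> z - z' = x' - x" using same_basic_axis by fastforce
  then show ?thesis using that z'(1) by blast
qed

text \<open>A middle point \<open>m\<close> of a level would need a partner at distance \<open>hi - lo\<close> inside \<open>[lo, hi]\<close>.\<close>
lemma level_at_most_two:
  assumes D: "D \<in> \<D>" and a: "(a, \<sigma>) \<in> D" and b: "(b, \<sigma>) \<in> D" and c: "(c, \<sigma>) \<in> D"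
  shows "a = b \<or> a = c \<or> b = c"
proof (rule ccontr)
  assume distinct: "\<not> (a = b \<or> a = c \<or> b = c)"
  define Q where "Q = {x. (x, \<sigma>) \<in> D}"
  have "Q \<subseteq> fst ` D" unfolding Q_def by force
  then have finQ: "finite Q" using basic_finite[OF D] finite_subset by blast
  have abc: "a \<in> Q" "b \<in> Q" "c \<in> Q" using a b c Q_def by auto
  define lo where "lo = Min Q"
  define hi where "hi = Max Q"
  have bounds: "lo \<le> x \<and> x \<le> hi" if "x \<in> Q" for x using finQ that lo_def hi_def by auto
  have "lo \<in> Q" "hi \<in> Q" using finQ abc lo_def hi_def Min_in Max_in by blast+
  moreover obtain m where m: "m \<in> Q" "m \<noteq> lo" "m \<noteq> hi" using abc distinct by metis
  ultimately obtain z' where "z' \<in> Q" "m - z' = hi - lo \<or> m - z' = lo - hi"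
    using difference_transfer[OF D, of hi \<sigma> lo m \<sigma>] unfolding Q_def by blast
  then show False using bounds[of z'] bounds[OF m(1)] m(2,3) by linarith
qed

end

section \<open>The basic set containing \<open>b\<close>\<close>

definition level :: "grp set \<Rightarrow> int \<Rightarrow> int set" where
  "level D \<sigma> = {x. (x, \<sigma>) \<in> D}"

lemma mem_level [simp]: "x \<in> level D \<sigma> \<longleftrightarrow> (x, \<sigma>) \<in> D"
  by (simp add: level_def)

lemma level_eqD: "level D \<sigma> = A \<Longrightarrow> (x, \<sigma>) \<in> D \<longleftrightarrow> x \<in> A"
  by auto

context schur_ring_axis
begin

context
  fixes D assumes D: "D \<in> \<D>" and b: "(0, 1) \<in> D"
begin

lemma snd_mem_basic_set_of_b:
  assumes d: "d \<in> D"
  shows "snd d = 1 \<or> snd d = -1"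
proof (rule ccontr)
  assume not_unit: "\<not> (snd d = 1 \<or> snd d = -1)"
  have same: "same_basic d (0, 1)" using D d b unfolding same_basic_def by blast
  show False
  proof (cases "snd d = 0")
    case True
    then show False using A_setD[OF A_set_axis same] by simp
  next
    case False
    define N where "N = nat \<bar>snd d\<bar>"
    have N: "int N = \<bar>snd d\<bar>" "0 < N" using False by (simp_all add: N_def)
    have "d = smul (int N) (0, sgn (snd d)) + (fst d, 0)"
      unfolding N(1) smul_def by (simp add: abs_mult_sgn)
    moreover have "smul (int N) (0, sgn (snd d)) \<in> range (smul (int N))" by (rule rangeI)
    moreover have "(fst d, 0) \<in> {g :: grp. snd g = 0}" by simp
    ultimately have "d \<in> {a + h | a h. a \<in> range (smul (int N)) \<and> h \<in> {g. snd g = 0}}" by blast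
    then have "int N dvd 1" using dvd_snd_if_same_basic[OF A_set_axis _ N(2) same] by simp
    then have "\<bar>snd d\<bar> = 1" using N(1) by simp
    then show False using not_unit by arith
  qed
qed

lemma basic_set_of_b_eq_levels: "D = (\<lambda>x. (x, 1)) ` level D 1 \<union> (\<lambda>x. (x, -1)) ` level D (-1)"
proof (rule set_eqI)
  fix g :: grp
  show "g \<in> D \<longleftrightarrow> g \<in> (\<lambda>x. (x, 1)) ` level D 1 \<union> (\<lambda>x. (x, -1)) ` level D (-1)"
    using snd_mem_basic_set_of_b[of g] by (cases g) auto
qed

lemma level_1_cases: "level D 1 = {0} \<or> (\<exists>i. i \<noteq> 0 \<and> level D 1 = {0, i})"
proof (cases "level D 1 \<subseteq> {0}")
  case True
  then have "level D 1 = {0}" using b by auto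
  then show ?thesis by (rule disjI1)
next
  case False
  then obtain i where i: "(i, 1) \<in> D" "i \<noteq> 0" by (auto simp: subset_iff)
  have "x = 0 \<or> x = i" if "(x, 1) \<in> D" for x
    using level_at_most_two[OF D that b i(1)] i(2) by blast
  then have "(x, 1) \<in> D \<longleftrightarrow> x = 0 \<or> x = i" for x using b i(1) by blast
  then have "level D 1 = {0, i}" unfolding set_eq_iff by simp
  then show ?thesis using i(2) by (intro disjI2 exI[of _ i]) simp
qed

lemma level_minus_1_if_level_1_singleton:
  assumes "level D 1 = {0}"
  shows "level D (-1) = {} \<or> (\<exists>j. level D (-1) = {j})"
proof (cases "level D (-1) = {}")
  case False
  then obtain j where j: "(j, -1) \<in> D" by auto
  have "(j', -1) \<in> D \<longleftrightarrow> j' = j" for j'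
  proof
    assume j': "(j', -1) \<in> D"
    obtain z' where "(z', 1) \<in> D" "0 - z' = j - j' \<or> 0 - z' = j' - j"
      using difference_transfer[OF D j j' b] .
    then show "j' = j" using level_eqD[OF assms] by auto
  qed (use j in simp)
  then have "level D (-1) = {j}" unfolding set_eq_iff by simp
  then show ?thesis by (intro disjI2 exI[of _ j])
qed simp

lemma level_minus_1_if_level_1_pair:
  assumes level_1: "level D 1 = {0, i}" and i: "i \<noteq> 0"
  shows "level D (-1) = {} \<or> (\<exists>u. level D (-1) = {u, u + i})"
proof (cases "level D (-1) = {}")
  case False
  then obtain j where j: "(j, -1) \<in> D" by auto
  have "(i, 1) \<in> D" using level_1 by auto
  then obtain z' where z': "(z', -1) \<in> D" "j - z' = i - 0 \<or> j - z' = 0 - i"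
    using difference_transfer[OF D _ b j] by blast
  have "\<exists>u. (u, -1) \<in> D \<and> (u + i, -1) \<in> D"
  proof (cases "j - z' = i")
    case True
    then have "z' + i = j" by simp
    then show ?thesis using z'(1) j by blast
  next
    case False
    then have "j + i = z'" using z'(2) by simp
    then show ?thesis using z'(1) j by blast
  qed
  then obtain u where u: "(u, -1) \<in> D" "(u + i, -1) \<in> D" by blast
  have "x = u \<or> x = u + i" if "(x, -1) \<in> D" for x
    using level_at_most_two[OF D that u] i by auto
  then have "(x, -1) \<in> D \<longleftrightarrow> x = u \<or> x = u + i" for x using u by blast
  then have "level D (-1) = {u, u + i}" unfolding set_eq_iff by simp
  then show ?thesis by (intro disjI2 exI[of _ u])
qed simp

text \<open>If \<open>m = u + i \<noteq> 0\<close>, then \<open>D\<close> is invariant under \<open>h \<mapsto> a\<^sup>m - h\<close> but not under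
  \<open>h \<mapsto> a\<^sup>-\<^sup>m - h\<close>, so \<open>a\<^sup>m\<close> and \<open>a\<^sup>-\<^sup>m\<close> have different structure constants and \<open>{a\<^sup>m}\<close> is basic.\<close>
lemma level_minus_1_pair_opposite:
  assumes level_1: "level D 1 = {0, i}" and level_minus_1: "level D (-1) = {u, u + i}"
    and i: "i \<noteq> 0"
  shows "u = -i"
proof (rule ccontr)
  assume "u \<noteq> -i"
  define m where "m = u + i"
  have m: "m \<noteq> 0" using \<open>u \<noteq> -i\<close> by (simp add: m_def)
  note l1 = level_eqD[OF level_1] and lm1 = level_eqD[OF level_minus_1]
  have D_eq: "D = {(0, 1), (i, 1), (u, -1), (u + i, -1)}"
    using basic_set_of_b_eq_levels[unfolded level_1 level_minus_1] by auto
  have not_same: "\<not> same_basic (m, 0) (-m, 0)"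
  proof
    assume same: "same_basic (m, 0) (-m, 0)"
    have "{h \<in> D. (m, 0) - h \<in> D} = D" unfolding D_eq m_def by auto
    then have "card {h \<in> D. (-m, 0) - h \<in> D} = card D"
      using conv_count_same_basic[OF D D same] unfolding conv_count_def by simp
    then have "{h \<in> D. (-m, 0) - h \<in> D} = D"
      using basic_finite[OF D] by (intro card_subset_eq) auto
    then have "(0, 1) \<in> {h \<in> D. (-m, 0) - h \<in> D}" "(i, 1) \<in> {h \<in> D. (-m, 0) - h \<in> D}"
      using b l1 by simp_all
    then have "(-m, -1) \<in> D" "(-m - i, -1) \<in> D" by simp_all
    then have "-m = u \<or> -m = u + i" "-m - i = u \<or> -m - i = u + i" using lm1 by auto
    then show False using m i unfolding m_def by linarith
  qed
  have "basic_of (m, 0) \<subseteq> {(m, 0)}"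
  proof
    fix g assume "g \<in> basic_of (m, 0)"
    then have "same_basic (m, 0) g" by (simp add: same_basic_iff_mem_basic_of)
    then show "g \<in> {(m, 0)}" using same_basic_axis not_same by blast
  qed
  then have "basic_of (m, 0) = {(m, 0)}" using mem_basic_of by blast
  then have singleton: "{(m, 0)} \<in> \<D>" using basic_of_in[of "(m, 0)"] by simp
  have "(i, 1) \<in> D" using l1 by simp
  then obtain z where z: "(z, 1) \<in> D" and same: "same_basic (i - 0, 0) (0 - z, 0)"
    using same_basic_difference_transfer[OF D _ b b] by blast
  have "z = i"
  proof (rule ccontr)
    assume "z \<noteq> i"
    then have "same_basic 0 (i, 0)" using z same same_basic_sym l1 by (simp add: zero_prod_def)
    then have "(i, 0) = (0 :: grp)" by (rule same_basic_0)
    then show False using i by (simp add: zero_prod_def)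
  qed
  then have "same_basic (i, 0) (-i, 0)" using same by simp
  then have "same_basic ((i, 0) + (m, 0)) ((-i, 0) + (m, 0))" by (rule same_basic_translate[OF singleton])
  then have "same_basic (i + m, 0) (-i + m, 0)" by simp
  then have "(-i + m, 0) = (i + m, 0::int) \<or> (-i + m, 0) = (-(i + m), 0::int)"
    by (rule same_basic_axis)
  then show False using i m by auto
qed

lemma basic_set_of_b_cases:
  "D = {(0, 1)} \<or>
   D = {(0, 1), (0, -1)} \<or>
   (\<exists>i0. i0 \<noteq> 0 \<and> D = {(i0, 1), (0, 1)}) \<or>
   (\<exists>i1. i1 \<noteq> 0 \<and> D = {(i1, -1), (0, 1)}) \<or>
   (\<exists>i2. i2 \<noteq> 0 \<and> D = {(0, 1), (i2, 1), (0, -1), (-i2, -1)})"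
proof -
  note D_eq = basic_set_of_b_eq_levels
  consider (single) "level D 1 = {0}" | (pair) i where "i \<noteq> 0" "level D 1 = {0, i}"
    using level_1_cases by blast
  then show ?thesis
  proof cases
    case single
    consider (empty) "level D (-1) = {}" | (one) j where "level D (-1) = {j}"
      using level_minus_1_if_level_1_singleton[OF single] by blast
    then show ?thesis
    proof cases
      case empty
      then show ?thesis using D_eq[unfolded single empty] by simp
    next
      case one
      then have "D = {(j, -1), (0, 1)}" using D_eq[unfolded single one] by auto
      then show ?thesis by (cases "j = 0") (auto simp: insert_commute)
    qed
  next
    case pair
    consider (empty) "level D (-1) = {}" | (two) u where "level D (-1) = {u, u + i}"
      using level_minus_1_if_level_1_pair[OF pair(2,1)] by blast
    then show ?thesis
    proof cases
      case empty
      then have "D = {(i, 1), (0, 1)}" using D_eq[unfolded pair(2) empty] by auto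
      then show ?thesis using pair(1) by blast
    next
      case two
      then have "u = -i" using level_minus_1_pair_opposite[OF pair(2) _ pair(1)] by blast
      then have "D = {(0, 1), (i, 1), (0, -1), (-i, -1)}"
        using D_eq[unfolded pair(2) two] by auto
      then show ?thesis using pair(1) by blast
    qed
  qed
qed

end

end

theorem theorem3p3:
  fixes \<D> :: "(int \<times> int) set set" and k :: int and D :: "(int \<times> int) set"
  assumes "schur_partition TYPE('f::field_char_0) \<D>"
    and "k \<noteq> 0"
    and "A_subgroup \<D> {(k * n, 0) | n. True}"
    and "D \<in> \<D>" and "(0, 1) \<in> D"
  shows "D = {(0, 1)} \<or>
         D = {(0, 1), (0, -1)} \<or>
         (\<exists>i0. i0 \<noteq> 0 \<and> D = {(i0, 1), (0, 1)}) \<or>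
         (\<exists>i1. i1 \<noteq> 0 \<and> D = {(i1, -1), (0, 1)}) \<or>
         (\<exists>i2. i2 \<noteq> 0 \<and> D = {(0, 1), (i2, 1), (0, -1), (-i2, -1)})"
proof -
  interpret schur_ring \<D>
    using schur_partition_imp_schur_ring[OF assms(1)] .
  interpret schur_ring_axis \<D> k
    using assms(2) A_set_if_A_subgroup[OF assms(3)] by unfold_locales
  show ?thesis using basic_set_of_b_cases[OF assms(4,5)] .
qed

end
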